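(* Let $L=L_1\times\cdots\times L_k$ where each $L_i$ ($i=1,\dots,k$) is a $C$-lattice. If $q_i$ is a quasi $n_i$-absorbing element of $L_i$ for all $i=1,\dots,k$, then $(q_1,\dots,q_k)$ is a quasi $m$-absorbing element of $L$, where $m=\max\{n_1,\dots,n_k\}+1$.
   Context: A multiplicative lattice is a complete lattice with least element $0$ and compact greatest element $1$, equipped with a commutative, associative product that distributes over arbitrary joins and has $1$ as multiplicative identity. An element $a$ is compact if $a\le\bigvee_{\alpha\in I}a_\alpha$ implies $a\le\bigvee_{\alpha\in I_0}a_\alpha$ for some finite $I_0\subseteq I$. A $C$-lattice is a multiplicative lattice generated under joins by a multiplicatively closed set of compact elements. $L_1\times\cdots\times L_k$ carries the componentwise order and product. $a^0=1$. For a positive integer $t$, a proper element $q$ ($q<1$) of a multiplicative lattice $M$ is quasi $t$-absorbing if whenever $a^tb\le q$ for some compact $a,b\in M$, then $a^t\le q$ or $a^{t-1}b\le q$. *)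

theory Defs
  imports "HOL-Library.FuncSet"
begin

text \<open>A lattice with multiplication, given on an explicit carrier set inside an
ambient type, so that a family of possibly different lattices can be handled.\<close>

record 'a mlat =
  carrier :: "'a set"
  le :: "'a \<Rightarrow> 'a \<Rightarrow> bool"
  mul :: "'a \<Rightarrow> 'a \<Rightarrow> 'a"

definition is_join :: "'a mlat \<Rightarrow> 'a set \<Rightarrow> 'a \<Rightarrow> bool" where
  "is_join L S x \<longleftrightarrow> x \<in> carrier L \<and> (\<forall>s\<in>S. le L s x) \<and>
     (\<forall>y\<in>carrier L. (\<forall>s\<in>S. le L s y) \<longrightarrow> le L x y)"

definition join :: "'a mlat \<Rightarrow> 'a set \<Rightarrow> 'a" where
  "join L S = (THE x. is_join L S x)"

definition top_el :: "'a mlat \<Rightarrow> 'a" where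
  "top_el L = join L (carrier L)"

definition bot_el :: "'a mlat \<Rightarrow> 'a" where
  "bot_el L = join L {}"

definition complete_lat :: "'a mlat \<Rightarrow> bool" where
  "complete_lat L \<longleftrightarrow>
     (\<forall>x\<in>carrier L. le L x x) \<and>
     (\<forall>x\<in>carrier L. \<forall>y\<in>carrier L. le L x y \<and> le L y x \<longrightarrow> x = y) \<and>
     (\<forall>x\<in>carrier L. \<forall>y\<in>carrier L. \<forall>z\<in>carrier L. le L x y \<and> le L y z \<longrightarrow> le L x z) \<and>
     (\<forall>S. S \<subseteq> carrier L \<longrightarrow> (\<exists>x. is_join L S x))"

definition compact :: "'a mlat \<Rightarrow> 'a \<Rightarrow> bool" where
  "compact L a \<longleftrightarrow> a \<in> carrier L \<and>
     (\<forall>S. S \<subseteq> carrier L \<longrightarrow> le L a (join L S) \<longrightarrow>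
        (\<exists>F. F \<subseteq> S \<and> finite F \<and> le L a (join L F)))"

definition mult_lattice :: "'a mlat \<Rightarrow> bool" where
  "mult_lattice L \<longleftrightarrow> complete_lat L \<and>
     compact L (top_el L) \<and>
     (\<forall>a\<in>carrier L. \<forall>b\<in>carrier L. mul L a b \<in> carrier L) \<and>
     (\<forall>a\<in>carrier L. \<forall>b\<in>carrier L. mul L a b = mul L b a) \<and>
     (\<forall>a\<in>carrier L. \<forall>b\<in>carrier L. \<forall>c\<in>carrier L. mul L (mul L a b) c = mul L a (mul L b c)) \<and>
     (\<forall>a\<in>carrier L. \<forall>S. S \<subseteq> carrier L \<longrightarrow> mul L a (join L S) = join L (mul L a ` S)) \<and>
     (\<forall>a\<in>carrier L. mul L (top_el L) a = a)"

definition C_lattice :: "'a mlat \<Rightarrow> bool" where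
  "C_lattice L \<longleftrightarrow> mult_lattice L \<and>
     (\<exists>C. C \<subseteq> carrier L \<and> (\<forall>c\<in>C. compact L c) \<and>
          (\<forall>c\<in>C. \<forall>d\<in>C. mul L c d \<in> C) \<and>
          (\<forall>a\<in>carrier L. \<exists>S. S \<subseteq> C \<and> a = join L S))"

primrec mpow :: "'a mlat \<Rightarrow> 'a \<Rightarrow> nat \<Rightarrow> 'a" where
  "mpow L a 0 = top_el L"
| "mpow L a (Suc n) = mul L a (mpow L a n)"

definition quasi_absorbing :: "'a mlat \<Rightarrow> nat \<Rightarrow> 'a \<Rightarrow> bool" where
  "quasi_absorbing L t q \<longleftrightarrow> 0 < t \<and> q \<in> carrier L \<and> q \<noteq> top_el L \<and>
     (\<forall>a b. compact L a \<longrightarrow> compact L b \<longrightarrow>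
        le L (mul L (mpow L a t) b) q \<longrightarrow>
        le L (mpow L a t) q \<or> le L (mul L (mpow L a (t - 1)) b) q)"

text \<open>Product L_0 x ... x L_(k-1) with componentwise order and product;
elements are extensional functions on {..<k}.\<close>

definition prod_mlat :: "nat \<Rightarrow> (nat \<Rightarrow> 'a mlat) \<Rightarrow> (nat \<Rightarrow> 'a) mlat" where
  "prod_mlat k Ls = \<lparr> carrier = (\<Pi>\<^sub>E i\<in>{..<k}. carrier (Ls i)),
     le = (\<lambda>f g. \<forall>i<k. le (Ls i) (f i) (g i)),
     mul = (\<lambda>f g. \<lambda>i. if i < k then mul (Ls i) (f i) (g i) else undefined) \<rparr>"

end

theory Submission
  imports Defs
begin

text \<open>If \<open>q\<close> is quasi \<open>t\<close>-absorbing in a \<open>C\<close>-lattice and \<open>t \<le> N\<close>, then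
\<open>a^(N+1) b \<le> q\<close> already forces \<open>a^N b \<le> q\<close> for compact \<open>a\<close>, \<open>b\<close>. Indeed
\<open>a^(N+1) b = a^t c\<close> with \<open>c = a^(N+1-t) b\<close>, which is compact because products of compact
elements of a \<open>C\<close>-lattice are compact; so either \<open>a^t \<le> q\<close>, whence \<open>a^N b \<le> a^t \<le> q\<close>,
or \<open>a^N b = a^(t-1) c \<le> q\<close>. Order, product, powers and compactness of
\<open>L\<^sub>1 \<times> \<dots> \<times> L\<^sub>k\<close> are componentwise, so for \<open>m = max n\<^sub>i + 1\<close> the second
alternative of quasi \<open>m\<close>-absorption holds in every component.\<close>

lemma complete_lat_refl: "complete_lat L \<Longrightarrow> x \<in> carrier L \<Longrightarrow> le L x x"
  unfolding complete_lat_def by blast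

lemma complete_lat_antisym:
  "complete_lat L \<Longrightarrow> x \<in> carrier L \<Longrightarrow> y \<in> carrier L \<Longrightarrow> le L x y \<Longrightarrow> le L y x \<Longrightarrow> x = y"
  unfolding complete_lat_def by blast

lemma complete_lat_trans:
  "complete_lat L \<Longrightarrow> x \<in> carrier L \<Longrightarrow> y \<in> carrier L \<Longrightarrow> z \<in> carrier L \<Longrightarrow>
    le L x y \<Longrightarrow> le L y z \<Longrightarrow> le L x z"
  unfolding complete_lat_def by blast

lemma join_eqI: assumes "complete_lat L" "is_join L S x" shows "join L S = x"
  unfolding join_def
proof (rule the_equality)
  fix y assume "is_join L S y"
  with assms show "y = x" unfolding is_join_def using complete_lat_antisym[OF assms(1)] by blast
qed fact

lemma is_join_join: assumes "complete_lat L" "S \<subseteq> carrier L" shows "is_join L S (join L S)"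
proof -
  obtain x where "is_join L S x" using assms unfolding complete_lat_def by blast
  with join_eqI[OF assms(1) this] show ?thesis by simp
qed

lemma join_closed: "complete_lat L \<Longrightarrow> S \<subseteq> carrier L \<Longrightarrow> join L S \<in> carrier L"
  using is_join_join unfolding is_join_def by blast

lemma join_upper: "complete_lat L \<Longrightarrow> S \<subseteq> carrier L \<Longrightarrow> s \<in> S \<Longrightarrow> le L s (join L S)"
  using is_join_join unfolding is_join_def by blast

lemma join_least:
  "complete_lat L \<Longrightarrow> S \<subseteq> carrier L \<Longrightarrow> y \<in> carrier L \<Longrightarrow> (\<And>s. s \<in> S \<Longrightarrow> le L s y) \<Longrightarrow>
    le L (join L S) y"
  using is_join_join unfolding is_join_def by blast

lemma join_mono:
  "complete_lat L \<Longrightarrow> F \<subseteq> G \<Longrightarrow> G \<subseteq> carrier L \<Longrightarrow> le L (join L F) (join L G)"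
  by (intro join_least) (auto intro: join_upper join_closed)

lemma top_el_eqI:
  assumes "complete_lat L" "x \<in> carrier L" "\<And>y. y \<in> carrier L \<Longrightarrow> le L y x"
  shows "top_el L = x"
  unfolding top_el_def using assms by (intro join_eqI) (auto simp: is_join_def)

lemma top_el_closed: "complete_lat L \<Longrightarrow> top_el L \<in> carrier L"
  unfolding top_el_def by (rule join_closed) auto

lemma le_top_el: "complete_lat L \<Longrightarrow> x \<in> carrier L \<Longrightarrow> le L x (top_el L)"
  unfolding top_el_def by (rule join_upper) auto

lemma mult_lattice_complete_lat: "mult_lattice L \<Longrightarrow> complete_lat L"
  unfolding mult_lattice_def by (elim conjE)

lemma mlat_mul_closed: "mult_lattice L \<Longrightarrow> a \<in> carrier L \<Longrightarrow> b \<in> carrier L \<Longrightarrow> mul L a b \<in> carrier L"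
  unfolding mult_lattice_def by (elim conjE) blast

lemma mlat_mul_comm: "mult_lattice L \<Longrightarrow> a \<in> carrier L \<Longrightarrow> b \<in> carrier L \<Longrightarrow> mul L a b = mul L b a"
  unfolding mult_lattice_def by (elim conjE) blast

lemma mlat_mul_assoc:
  "mult_lattice L \<Longrightarrow> a \<in> carrier L \<Longrightarrow> b \<in> carrier L \<Longrightarrow> c \<in> carrier L \<Longrightarrow>
    mul L (mul L a b) c = mul L a (mul L b c)"
  unfolding mult_lattice_def by (elim conjE) blast

lemma mlat_mul_join:
  "mult_lattice L \<Longrightarrow> a \<in> carrier L \<Longrightarrow> S \<subseteq> carrier L \<Longrightarrow> mul L a (join L S) = join L (mul L a ` S)"
  unfolding mult_lattice_def by (elim conjE) blast

lemma mlat_mul_top_el: "mult_lattice L \<Longrightarrow> a \<in> carrier L \<Longrightarrow> mul L (top_el L) a = a"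
  unfolding mult_lattice_def by (elim conjE) blast

lemma mlat_compact_top_el: "mult_lattice L \<Longrightarrow> compact L (top_el L)"
  unfolding mult_lattice_def by (elim conjE)

lemma mlat_mul_mono:
  assumes L: "mult_lattice L" and ab: "le L a b" and carr: "a \<in> carrier L" "b \<in> carrier L" "c \<in> carrier L"
  shows "le L (mul L c a) (mul L c b)"
proof -
  have cl: "complete_lat L" using L by (rule mult_lattice_complete_lat)
  have "join L {a, b} = b"
    using ab carr complete_lat_refl[OF cl] by (intro join_eqI[OF cl]) (auto simp: is_join_def)
  then have "mul L c b = join L (mul L c ` {a, b})"
    using mlat_mul_join[OF L carr(3), of "{a, b}"] carr by simp
  moreover have "le L (mul L c a) (join L {mul L c a, mul L c b})"
    using carr by (intro join_upper[OF cl]) (auto intro: mlat_mul_closed[OF L])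
  ultimately show ?thesis by simp
qed

lemma mlat_mul_le_left:
  assumes L: "mult_lattice L" and carr: "x \<in> carrier L" "y \<in> carrier L"
  shows "le L (mul L x y) x"
proof -
  have cl: "complete_lat L" using L by (rule mult_lattice_complete_lat)
  have "le L (mul L x y) (mul L x (top_el L))"
    using carr by (intro mlat_mul_mono[OF L] le_top_el top_el_closed cl)
  also have "mul L x (top_el L) = x"
    using mlat_mul_comm[OF L carr(1) top_el_closed[OF cl]] mlat_mul_top_el[OF L carr(1)] by simp
  finally show ?thesis .
qed

lemma mpow_closed: "mult_lattice L \<Longrightarrow> a \<in> carrier L \<Longrightarrow> mpow L a s \<in> carrier L"
  by (induction s) (auto intro: mlat_mul_closed top_el_closed mult_lattice_complete_lat)

lemma mul_mpow_add:
  assumes L: "mult_lattice L" and carr: "a \<in> carrier L" "b \<in> carrier L"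
  shows "mul L (mpow L a (i + j)) b = mul L (mpow L a i) (mul L (mpow L a j) b)"
  by (induction i)
    (simp_all add: carr mlat_mul_top_el[OF L] mlat_mul_assoc[OF L] mlat_mul_closed[OF L] mpow_closed[OF L])

lemma compact_carrier: "compact L a \<Longrightarrow> a \<in> carrier L"
  unfolding compact_def by blast

lemma compactD:
  "compact L a \<Longrightarrow> S \<subseteq> carrier L \<Longrightarrow> le L a (join L S) \<Longrightarrow> \<exists>F\<subseteq>S. finite F \<and> le L a (join L F)"
  unfolding compact_def by simp

lemma C_lattice_mult_lattice: "C_lattice L \<Longrightarrow> mult_lattice L"
  unfolding C_lattice_def by (elim conjE)

lemma compact_join_finite:
  assumes cl: "complete_lat L" and fin: "finite F" and cF: "\<And>f. f \<in> F \<Longrightarrow> compact L f"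
  shows "compact L (join L F)"
  unfolding compact_def
proof (intro conjI allI impI)
  have F: "F \<subseteq> carrier L" using compact_carrier[OF cF] by blast
  then show "join L F \<in> carrier L" by (rule join_closed[OF cl])
  fix S assume S: "S \<subseteq> carrier L" and le: "le L (join L F) (join L S)"
  have "\<forall>f\<in>F. \<exists>G. G \<subseteq> S \<and> finite G \<and> le L f (join L G)"
  proof
    fix f assume f: "f \<in> F"
    have "le L f (join L S)"
      by (rule complete_lat_trans[OF cl compact_carrier[OF cF[OF f]] join_closed[OF cl F]
            join_closed[OF cl S] join_upper[OF cl F f] le])
    then show "\<exists>G. G \<subseteq> S \<and> finite G \<and> le L f (join L G)" using compactD[OF cF[OF f] S] by blast
  qed
  from bchoice[OF this] obtain g where g0: "\<forall>f\<in>F. g f \<subseteq> S \<and> finite (g f) \<and> le L f (join L (g f))"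
    by (elim exE)
  have g: "g f \<subseteq> S" "finite (g f)" "le L f (join L (g f))" if "f \<in> F" for f
    using g0 that by blast+
  define G where "G = \<Union> (g ` F)"
  have GS: "G \<subseteq> S" and "finite G" using g fin by (auto simp: G_def)
  moreover have "le L (join L F) (join L G)"
  proof (rule join_least[OF cl F])
    have G: "G \<subseteq> carrier L" using GS S by blast
    then show "join L G \<in> carrier L" by (rule join_closed[OF cl])
    fix f assume f: "f \<in> F"
    have gf: "g f \<subseteq> carrier L" using g(1)[OF f] S by blast
    have "le L (join L (g f)) (join L G)" using f G by (intro join_mono[OF cl]) (auto simp: G_def)
    then show "le L f (join L G)"
      by (rule complete_lat_trans[OF cl compact_carrier[OF cF[OF f]] join_closed[OF cl gf]
            join_closed[OF cl G] g(3)[OF f]])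
  qed
  ultimately show "\<exists>H. H \<subseteq> S \<and> finite H \<and> le L (join L F) (join L H)" by blast
qed

lemma compact_eq_join_finite:
  assumes cl: "complete_lat L" and C: "C \<subseteq> carrier L" and gen: "\<forall>a\<in>carrier L. \<exists>S. S \<subseteq> C \<and> a = join L S"
    and a: "compact L a"
  shows "\<exists>F. F \<subseteq> C \<and> finite F \<and> a = join L F"
proof -
  have ac: "a \<in> carrier L" using a by (rule compact_carrier)
  obtain S where S: "S \<subseteq> C" "a = join L S" using gen ac by blast
  have Sc: "S \<subseteq> carrier L" using S(1) C by blast
  obtain F where F: "F \<subseteq> S" "finite F" "le L a (join L F)"
    using compactD[OF a Sc] complete_lat_refl[OF cl ac] S(2) by auto
  have "le L (join L F) a" using join_mono[OF cl F(1) Sc] S(2) by simp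
  then have "a = join L F"
    using F complete_lat_antisym[OF cl ac join_closed[OF cl]] Sc by blast
  then show ?thesis using F S(1) by blast
qed

text \<open>Writing \<open>a = \<Squnion>F\<close> and \<open>b = \<Squnion>G\<close> with finite \<open>F, G \<subseteq> C\<close>, distributivity
expresses \<open>ab\<close> as a finite join of finite joins of elements \<open>gf \<in> C\<close>.\<close>

lemma C_lattice_compact_mul:
  assumes L: "C_lattice L" and a: "compact L a" and b: "compact L b"
  shows "compact L (mul L a b)"
proof -
  have ml: "mult_lattice L" using L by (rule C_lattice_mult_lattice)
  have cl: "complete_lat L" using ml by (rule mult_lattice_complete_lat)
  obtain C where C: "C \<subseteq> carrier L" "\<forall>c\<in>C. compact L c" "\<forall>c\<in>C. \<forall>d\<in>C. mul L c d \<in> C"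
      "\<forall>a\<in>carrier L. \<exists>S. S \<subseteq> C \<and> a = join L S"
    using L unfolding C_lattice_def by blast
  obtain F where F: "F \<subseteq> C" "finite F" "a = join L F" using compact_eq_join_finite[OF cl C(1,4) a] by blast
  obtain G where G: "G \<subseteq> C" "finite G" "b = join L G" using compact_eq_join_finite[OF cl C(1,4) b] by blast
  have Fc: "F \<subseteq> carrier L" and Gc: "G \<subseteq> carrier L" using F(1) G(1) C(1) by auto
  have ac: "a \<in> carrier L" using a by (rule compact_carrier)
  have inner: "compact L (mul L g a)" if g: "g \<in> G" for g
  proof -
    have gc: "g \<in> carrier L" using g Gc by blast
    have "mul L g a = join L (mul L g ` F)" using F(3) mlat_mul_join[OF ml gc Fc] by simp
    moreover have "compact L (join L (mul L g ` F))"
      using F G g C(2,3) by (intro compact_join_finite[OF cl]) blast+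
    ultimately show ?thesis by simp
  qed
  have "mul L a b = join L (mul L a ` G)" using G(3) mlat_mul_join[OF ml ac Gc] by simp
  also have "mul L a ` G = (\<lambda>g. mul L g a) ` G"
    using Gc ac mlat_mul_comm[OF ml] by (intro image_cong[OF refl]) blast
  finally have "mul L a b = join L ((\<lambda>g. mul L g a) ` G)" .
  moreover have "compact L (join L ((\<lambda>g. mul L g a) ` G))"
    using G(2) inner by (intro compact_join_finite[OF cl]) auto
  ultimately show ?thesis by simp
qed

lemma C_lattice_compact_mpow:
  assumes L: "C_lattice L" and a: "compact L a" shows "compact L (mpow L a s)"
proof (induction s)
  case 0
  show ?case using mlat_compact_top_el[OF C_lattice_mult_lattice[OF L]] by simp
next
  case (Suc s)
  then show ?case using C_lattice_compact_mul[OF L a] by simp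
qed

lemma quasi_absorbingD:
  "quasi_absorbing L t q \<Longrightarrow> compact L a \<Longrightarrow> compact L b \<Longrightarrow> le L (mul L (mpow L a t) b) q \<Longrightarrow>
    le L (mpow L a t) q \<or> le L (mul L (mpow L a (t - 1)) b) q"
  unfolding quasi_absorbing_def by simp

lemma quasi_absorbing_cancel_power:
  assumes L: "C_lattice L" and q: "quasi_absorbing L t q" and a: "compact L a" and b: "compact L b"
    and tN: "t \<le> N" and le: "le L (mul L (mpow L a (Suc N)) b) q"
  shows "le L (mul L (mpow L a N) b) q"
proof -
  have ml: "mult_lattice L" using L by (rule C_lattice_mult_lattice)
  have cl: "complete_lat L" using ml by (rule mult_lattice_complete_lat)
  have t0: "0 < t" using q unfolding quasi_absorbing_def by (elim conjE)
  have qc: "q \<in> carrier L" using q unfolding quasi_absorbing_def by (elim conjE)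
  have ac: "a \<in> carrier L" and bc: "b \<in> carrier L" using compact_carrier[OF a] compact_carrier[OF b] .
  define c where "c = mul L (mpow L a (Suc N - t)) b"
  have "compact L c" unfolding c_def by (rule C_lattice_compact_mul[OF L C_lattice_compact_mpow[OF L a] b])
  moreover have "le L (mul L (mpow L a t) c) q"
    using le tN mul_mpow_add[OF ml ac bc, of t "Suc N - t"] by (simp add: c_def)
  ultimately consider "le L (mpow L a t) q" | "le L (mul L (mpow L a (t - 1)) c) q"
    using quasi_absorbingD[OF q a] by blast
  then show ?thesis
  proof cases
    case 1
    have "mul L (mpow L a N) b = mul L (mpow L a t) (mul L (mpow L a (N - t)) b)"
      using tN mul_mpow_add[OF ml ac bc, of t "N - t"] by simp
    also have "le L \<dots> (mpow L a t)"
      by (rule mlat_mul_le_left[OF ml mpow_closed[OF ml ac] mlat_mul_closed[OF ml mpow_closed[OF ml ac] bc]])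
    finally show ?thesis
      by (rule complete_lat_trans[OF cl mlat_mul_closed[OF ml mpow_closed[OF ml ac] bc]
            mpow_closed[OF ml ac] qc _ 1])
  next
    case 2
    then show ?thesis
      using tN t0 mul_mpow_add[OF ml ac bc, of "t - 1" "Suc N - t"] by (simp add: c_def)
  qed
qed

lemma prod_mlat_carrier: "carrier (prod_mlat k Ls) = (\<Pi>\<^sub>E i\<in>{..<k}. carrier (Ls i))"
  by (simp add: prod_mlat_def)

lemma prod_mlat_le: "le (prod_mlat k Ls) f g \<longleftrightarrow> (\<forall>i<k. le (Ls i) (f i) (g i))"
  by (simp add: prod_mlat_def)

lemma prod_mlat_mul: "i < k \<Longrightarrow> mul (prod_mlat k Ls) f g i = mul (Ls i) (f i) (g i)"
  by (simp add: prod_mlat_def)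

lemma is_join_prod_mlat:
  assumes cl: "\<And>i. i < k \<Longrightarrow> complete_lat (Ls i)" and S: "S \<subseteq> carrier (prod_mlat k Ls)"
  shows "is_join (prod_mlat k Ls) S (\<lambda>i\<in>{..<k}. join (Ls i) ((\<lambda>f. f i) ` S))"
proof -
  have Si: "(\<lambda>f. f i) ` S \<subseteq> carrier (Ls i)" if "i < k" for i
    using S that by (auto simp: prod_mlat_carrier)
  show ?thesis
    unfolding is_join_def prod_mlat_le
  proof (intro conjI ballI allI impI)
    show "(\<lambda>i\<in>{..<k}. join (Ls i) ((\<lambda>f. f i) ` S)) \<in> carrier (prod_mlat k Ls)"
      using join_closed[OF cl Si] by (simp add: prod_mlat_carrier)
  next
    fix s i assume "s \<in> S" "i < k"
    then show "le (Ls i) (s i) ((\<lambda>i\<in>{..<k}. join (Ls i) ((\<lambda>f. f i) ` S)) i)"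
      using join_upper[OF cl Si] by simp
  next
    fix y i assume y: "y \<in> carrier (prod_mlat k Ls)" and ub: "\<forall>s\<in>S. \<forall>i<k. le (Ls i) (s i) (y i)"
      and i: "i < k"
    have "y i \<in> carrier (Ls i)" using y i by (auto simp: prod_mlat_carrier)
    then show "le (Ls i) ((\<lambda>i\<in>{..<k}. join (Ls i) ((\<lambda>f. f i) ` S)) i) (y i)"
      using ub i by (auto intro!: join_least[OF cl Si])
  qed
qed

lemma complete_lat_prod_mlat:
  assumes cl: "\<And>i. i < k \<Longrightarrow> complete_lat (Ls i)"
  shows "complete_lat (prod_mlat k Ls)"
  unfolding complete_lat_def
proof (intro conjI ballI allI impI)
  fix x y z assume carr: "x \<in> carrier (prod_mlat k Ls)" "y \<in> carrier (prod_mlat k Ls)"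
    "z \<in> carrier (prod_mlat k Ls)"
  then have comp: "\<And>i. i < k \<Longrightarrow> x i \<in> carrier (Ls i) \<and> y i \<in> carrier (Ls i) \<and> z i \<in> carrier (Ls i)"
    by (auto simp: prod_mlat_carrier)
  show "le (prod_mlat k Ls) x x"
    using comp complete_lat_refl[OF cl] by (simp add: prod_mlat_le)
  have "le (Ls i) (x i) (z i)" if "i < k" "le (Ls i) (x i) (y i)" "le (Ls i) (y i) (z i)" for i
    using comp[OF that(1)] by (intro complete_lat_trans[OF cl[OF that(1)] _ _ _ that(2,3)]) auto
  then show "le (prod_mlat k Ls) x y \<and> le (prod_mlat k Ls) y z \<Longrightarrow> le (prod_mlat k Ls) x z"
    unfolding prod_mlat_le by blast
  show "le (prod_mlat k Ls) x y \<and> le (prod_mlat k Ls) y x \<Longrightarrow> x = y"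
  proof (elim conjE, intro PiE_ext[of _ "{..<k}" "\<lambda>i. carrier (Ls i)"])
    show "x \<in> (\<Pi>\<^sub>E i\<in>{..<k}. carrier (Ls i))" "y \<in> (\<Pi>\<^sub>E i\<in>{..<k}. carrier (Ls i))"
      using carr by (simp_all add: prod_mlat_carrier)
    fix i assume "le (prod_mlat k Ls) x y" "le (prod_mlat k Ls) y x" "i \<in> {..<k}"
    then have "i < k" "le (Ls i) (x i) (y i)" "le (Ls i) (y i) (x i)" by (simp_all add: prod_mlat_le)
    then show "x i = y i" using comp by (intro complete_lat_antisym[OF cl]) auto
  qed
next
  fix S assume "S \<subseteq> carrier (prod_mlat k Ls)"
  then show "\<exists>x. is_join (prod_mlat k Ls) S x" using is_join_prod_mlat[of k Ls S] cl by metis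
qed

lemma prod_mlat_join:
  assumes cl: "\<And>i. i < k \<Longrightarrow> complete_lat (Ls i)" and S: "S \<subseteq> carrier (prod_mlat k Ls)" and i: "i < k"
  shows "join (prod_mlat k Ls) S i = join (Ls i) ((\<lambda>f. f i) ` S)"
  using join_eqI[OF complete_lat_prod_mlat is_join_prod_mlat, OF cl cl S] i by simp

lemma prod_mlat_top_el:
  assumes cl: "\<And>i. i < k \<Longrightarrow> complete_lat (Ls i)"
  shows "top_el (prod_mlat k Ls) = (\<lambda>i\<in>{..<k}. top_el (Ls i))"
proof (rule top_el_eqI[OF complete_lat_prod_mlat[OF cl]])
  show "(\<lambda>i\<in>{..<k}. top_el (Ls i)) \<in> carrier (prod_mlat k Ls)"
    using top_el_closed[OF cl] by (simp add: prod_mlat_carrier)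
  fix y assume "y \<in> carrier (prod_mlat k Ls)"
  then show "le (prod_mlat k Ls) y (\<lambda>i\<in>{..<k}. top_el (Ls i))"
    using le_top_el[OF cl] by (simp add: prod_mlat_carrier prod_mlat_le PiE_iff)
qed

lemma prod_mlat_mpow:
  assumes cl: "\<And>i. i < k \<Longrightarrow> complete_lat (Ls i)" and i: "i < k"
  shows "mpow (prod_mlat k Ls) a s i = mpow (Ls i) (a i) s"
  using i by (induction s) (simp_all add: prod_mlat_top_el[OF cl] prod_mlat_mul)

lemma prod_mlat_le_mul_mpow_iff:
  assumes cl: "\<And>i. i < k \<Longrightarrow> complete_lat (Ls i)"
  shows "le (prod_mlat k Ls) (mul (prod_mlat k Ls) (mpow (prod_mlat k Ls) a s) b) c \<longleftrightarrow>
    (\<forall>i<k. le (Ls i) (mul (Ls i) (mpow (Ls i) (a i) s) (b i)) (c i))"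
  by (simp add: prod_mlat_le prod_mlat_mul prod_mlat_mpow[OF cl])

lemma prod_mlat_update_closed:
  assumes "a \<in> carrier (prod_mlat k Ls)" "i < k" "s \<in> carrier (Ls i)"
  shows "a(i := s) \<in> carrier (prod_mlat k Ls)"
  using PiE_fun_upd[of s "\<lambda>i. carrier (Ls i)" i a "{..<k}"] assms
  by (simp add: prod_mlat_carrier insert_absorb)

text \<open>Replacing the \<open>i\<close>-th coordinate of \<open>a\<close> by the elements of \<open>S\<close> turns a cover of
\<open>a i\<close> by \<open>S\<close> into a cover of \<open>a\<close>.\<close>

lemma prod_mlat_compact_component:
  assumes cl: "\<And>i. i < k \<Longrightarrow> complete_lat (Ls i)" and a: "compact (prod_mlat k Ls) a" and i: "i < k"
  shows "compact (Ls i) (a i)"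
  unfolding compact_def
proof (intro conjI allI impI)
  let ?P = "prod_mlat k Ls"
  have aP: "a \<in> carrier ?P" using a by (rule compact_carrier)
  then show "a i \<in> carrier (Ls i)" using i by (auto simp: prod_mlat_carrier)
  fix S assume S: "S \<subseteq> carrier (Ls i)" and le: "le (Ls i) (a i) (join (Ls i) S)"
  show "\<exists>F\<subseteq>S. finite F \<and> le (Ls i) (a i) (join (Ls i) F)"
  proof (cases "S = {}")
    case True
    then show ?thesis using le by blast
  next
    case nonempty: False
    define S' where "S' = (\<lambda>s. a(i := s)) ` S"
    have S'P: "S' \<subseteq> carrier ?P" using S by (auto simp: S'_def intro: prod_mlat_update_closed[OF aP i])
    have proj: "(\<lambda>f. f i) ` S' = S" by (simp add: S'_def image_image)
    have "le ?P a (join ?P S')"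
      unfolding prod_mlat_le
    proof (intro allI impI)
      fix j assume j: "j < k"
      have Sj: "(\<lambda>f. f j) ` S' \<subseteq> carrier (Ls j)" using S'P j by (auto simp: prod_mlat_carrier)
      show "le (Ls j) (a j) (join ?P S' j)"
      proof (cases "j = i")
        case True
        then show ?thesis using le proj prod_mlat_join[OF cl S'P i] by simp
      next
        case False
        then have "a j \<in> (\<lambda>f. f j) ` S'" using nonempty by (force simp: S'_def image_image)
        then show ?thesis by (simp add: prod_mlat_join[OF cl S'P j] join_upper[OF cl[OF j] Sj])
      qed
    qed
    then obtain F' where F': "F' \<subseteq> S'" "finite F'" "le ?P a (join ?P F')"
      using compactD[OF a S'P] by blast
    have "F' \<subseteq> carrier ?P" using F'(1) S'P by blast
    from prod_mlat_join[OF cl this i] have "le (Ls i) (a i) (join (Ls i) ((\<lambda>f. f i) ` F'))"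
      using F'(3) i unfolding prod_mlat_le by metis
    moreover have "(\<lambda>f. f i) ` F' \<subseteq> S" using F'(1) proj by blast
    ultimately show ?thesis using F'(2) by blast
  qed
qed

theorem mainTheorem13:
  fixes Ls :: "nat \<Rightarrow> 'a mlat" and k :: nat and n :: "nat \<Rightarrow> nat" and q :: "nat \<Rightarrow> 'a"
  assumes "1 \<le> k"
    and "\<And>i. i < k \<Longrightarrow> C_lattice (Ls i)"
    and "\<And>i. i < k \<Longrightarrow> quasi_absorbing (Ls i) (n i) (q i)"
  shows "quasi_absorbing (prod_mlat k Ls) (Max (n ` {..<k}) + 1) (restrict q {..<k})"
proof -
  let ?P = "prod_mlat k Ls" and ?q = "restrict q {..<k}"
  define N where "N = Max (n ` {..<k})"
  have cl: "complete_lat (Ls i)" if "i < k" for i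
    using mult_lattice_complete_lat[OF C_lattice_mult_lattice[OF assms(2)[OF that]]] .
  have q_carrier: "q i \<in> carrier (Ls i)" if "i < k" for i
    using assms(3)[OF that] unfolding quasi_absorbing_def by (elim conjE)
  have q_proper: "q i \<noteq> top_el (Ls i)" if "i < k" for i
    using assms(3)[OF that] unfolding quasi_absorbing_def by (elim conjE)
  have q0: "?q 0 \<noteq> top_el ?P 0" using q_proper[of 0] assms(1) by (simp add: prod_mlat_top_el[OF cl])
  have "?q \<in> carrier ?P" using q_carrier by (simp add: prod_mlat_carrier)
  moreover from q0 have "?q \<noteq> top_el ?P" by metis
  moreover have "le ?P (mul ?P (mpow ?P a N) b) ?q"
    if a: "compact ?P a" and b: "compact ?P b" and le: "le ?P (mul ?P (mpow ?P a (Suc N)) b) ?q" for a b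
  proof -
    have "le (Ls i) (mul (Ls i) (mpow (Ls i) (a i) N) (b i)) (q i)" if i: "i < k" for i
    proof (rule quasi_absorbing_cancel_power[OF assms(2)[OF i] assms(3)[OF i]])
      show "compact (Ls i) (a i)" "compact (Ls i) (b i)"
        using prod_mlat_compact_component[OF _ a i] prod_mlat_compact_component[OF _ b i] cl by blast+
      show "n i \<le> N" using i by (simp add: N_def)
      show "le (Ls i) (mul (Ls i) (mpow (Ls i) (a i) (Suc N)) (b i)) (q i)"
        using le i by (simp del: mpow.simps add: prod_mlat_le_mul_mpow_iff[OF cl])
    qed
    then show ?thesis by (simp add: prod_mlat_le_mul_mpow_iff[OF cl])
  qed
  ultimately show ?thesis
    unfolding quasi_absorbing_def N_def[symmetric] by simp
qed

end
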